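(* Let $p$ be a prime, $k$ a field of characteristic $p$, and $\gamma\in k$ a root of unity of order $q$. Then every power series $g(\zeta)=\gamma\zeta+\cdots\in k[[\zeta]]$ is conjugated to a power series of the form $\hat g(\zeta)=\gamma\zeta\left(1+\sum_{j=1}^{\infty}a_j\zeta^{jq}\right)$. Moreover, $a_1\ne0$ if and only if $i_0(g^q)=q$, and in this case the quotient $a_2/a_1^2$ depends only on $g$ (not on the choice of such $\hat g$).
   Context: Two power series $g,\hat g\in k[[\zeta]]$ with zero constant term and nonzero linear coefficient are conjugated if there is such a power series $h$ with $\hat g=h\circ g\circ h^{-1}$. $\mathrm{ord}$ is the lowest degree of a nonzero term; $i_0(h)=\mathrm{ord}\big((h(\zeta)-\zeta)/\zeta\big)$ for $h(\zeta)=\zeta+\cdots$, and $g^q$ is the $q$-th compositional iterate. *)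

theory Defs
  imports "HOL-Computational_Algebra.Formal_Power_Series" "HOL-Library.Extended_Nat"
begin

definition admissible :: "'a::field fps \<Rightarrow> bool" where
  "admissible g \<longleftrightarrow> fps_nth g 0 = 0 \<and> fps_nth g 1 \<noteq> 0"

definition conjugated :: "'a::field fps \<Rightarrow> 'a fps \<Rightarrow> bool" where
  "conjugated g ghat \<longleftrightarrow> (\<exists>h. admissible h \<and> ghat = h oo g oo fps_inv h)"

primrec fps_iter :: "'a::field fps \<Rightarrow> nat \<Rightarrow> 'a fps" where
  "fps_iter g 0 = fps_X"
| "fps_iter g (Suc n) = g oo fps_iter g n"

definition i0 :: "'a::field fps \<Rightarrow> enat" where
  "i0 h = (if h = fps_X then \<infinity> else enat (subdegree (fps_shift 1 (h - fps_X))))"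

definition normal_form :: "'a::field \<Rightarrow> nat \<Rightarrow> (nat \<Rightarrow> 'a) \<Rightarrow> 'a fps" where
  "normal_form \<gamma> q a = fps_const \<gamma> * fps_X *
     (1 + Abs_fps (\<lambda>n. if n > 0 \<and> q dvd n then a (n div q) else 0))"

end

theory Submission
  imports Defs
begin

text \<open>Conjugating by \<open>X + c X^k\<close>, \<open>k \<ge> 2\<close>, shifts the \<open>k\<close>-th coefficient of a series
  with linear coefficient \<open>\<gamma>\<close> by \<open>c (\<gamma>^k - \<gamma>)\<close> and leaves the lower ones alone, so the
  coefficients of all \<open>X^k\<close> with \<open>k \<noteq> 1 mod q\<close> can be removed one after another; the
  composite conjugations converge formally and conjugate \<open>g\<close> to a normal form \<open>N\<close>.
  The \<open>q\<close>-th iterate of \<open>N\<close> is \<open>X + q a\<^sub>1 X^(q+1) + \<dots>\<close>, and conjugation multiplies the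
  first nontrivial coefficient of a series tangent to the identity by a unit; since \<open>p\<close>
  does not divide \<open>q\<close>, \<open>i\<^sub>0(g^q) = q\<close> iff \<open>a\<^sub>1 \<noteq> 0\<close>. Finally, a conjugacy \<open>H\<close> between two
  normal forms only involves powers \<open>X^k\<close> with \<open>k = 1 mod q\<close>, and comparing the coefficients
  of \<open>X^(q+1)\<close> and \<open>X^(2q+1)\<close> in \<open>H \<circ> N\<^sub>a = N\<^sub>b \<circ> H\<close> gives \<open>a\<^sub>1 = b\<^sub>1 c^q\<close> and
  \<open>a\<^sub>2 = b\<^sub>2 c^(2q)\<close> with \<open>c = H'(0)\<close>.\<close>

unbundle fps_syntax

section \<open>Congruence modulo powers of \<open>X\<close>\<close>

definition fps_cong :: "nat \<Rightarrow> 'a::comm_ring_1 fps \<Rightarrow> 'a fps \<Rightarrow> bool" where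
  "fps_cong N f g \<longleftrightarrow> (\<forall>i<N. f $ i = g $ i)"

lemma fps_cong_refl [simp]: "fps_cong N f f"
  by (simp add: fps_cong_def)

lemma fps_cong_sym: "fps_cong N f g \<Longrightarrow> fps_cong N g f"
  by (simp add: fps_cong_def)

lemma fps_cong_trans [trans]: "fps_cong N f g \<Longrightarrow> fps_cong N g h \<Longrightarrow> fps_cong N f h"
  by (simp add: fps_cong_def)

lemma fps_cong_mono: "fps_cong N f g \<Longrightarrow> M \<le> N \<Longrightarrow> fps_cong M f g"
  by (simp add: fps_cong_def)

lemma fps_cong_add: "fps_cong N f f' \<Longrightarrow> fps_cong N g g' \<Longrightarrow> fps_cong N (f + g) (f' + g')"
  by (simp add: fps_cong_def)

lemma fps_cong_mult: "fps_cong N f f' \<Longrightarrow> fps_cong N g g' \<Longrightarrow> fps_cong N (f * g) (f' * g')"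
  unfolding fps_cong_def fps_mult_nth by (auto intro!: sum.cong)

lemma fps_cong_power: "fps_cong N f f' \<Longrightarrow> fps_cong N (f ^ m) (f' ^ m)"
  by (induction m) (auto intro: fps_cong_mult)

lemma fps_cong_compose_right: "fps_cong N f f' \<Longrightarrow> fps_cong N (f oo g) (f' oo g)"
  unfolding fps_cong_def fps_compose_nth by (auto intro!: sum.cong)

lemma fps_cong_compose_left: "fps_cong N g g' \<Longrightarrow> fps_cong N (f oo g) (f oo g')"
  using fps_cong_power[of N g g'] unfolding fps_cong_def fps_compose_nth by (auto intro!: sum.cong)

lemma fps_X_power_dvd_iff: "fps_X ^ N dvd (f :: 'a::comm_ring_1 fps) \<longleftrightarrow> (\<forall>i<N. f $ i = 0)"
proof
  assume "fps_X ^ N dvd f"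
  then show "\<forall>i<N. f $ i = 0" by (auto simp: fps_X_power_mult_nth)
next
  assume "\<forall>i<N. f $ i = 0"
  then have "f = fps_X ^ N * fps_shift N f"
    by (intro fps_ext) (simp add: fps_X_power_mult_nth)
  then show "fps_X ^ N dvd f" by (metis dvd_triv_left)
qed

lemma fps_cong_iff_dvd: "fps_cong N f g \<longleftrightarrow> fps_X ^ N dvd (f - g)"
  by (simp add: fps_cong_def fps_X_power_dvd_iff)

text \<open>First-order Taylor expansion of a composition: \<open>f \<circ> (u + E) \<equiv> f \<circ> u + f'(0) E\<close>
  modulo \<open>X^(n+1)\<close> when \<open>E = O(X^n)\<close> and \<open>u = O(X)\<close>, since \<open>u E\<close> and \<open>E\<^sup>2\<close> vanish there.\<close>

lemma fps_cong_power_add_small: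
  fixes u E :: "'a::comm_ring_1 fps"
  assumes u: "fps_X dvd u" and E: "fps_X ^ n dvd E" and n: "n \<ge> 1"
  shows "fps_cong (n + 1) ((u + E) ^ i) (u ^ i + (if i = 1 then E else 0))"
proof (induction i)
  case (Suc i)
  show ?case
  proof (cases "i = 0")
    case False
    have "fps_cong (n + 1) ((u + E) ^ Suc i) ((u + E) * (u ^ i + (if i = 1 then E else 0)))"
      using fps_cong_mult[OF fps_cong_refl Suc.IH] by simp
    moreover have "fps_X ^ (n + 1) dvd (u + E) * (u ^ i + (if i = 1 then E else 0)) - u ^ Suc i"
    proof -
      have "fps_X ^ (n + 1) dvd E * u ^ i"
        using mult_dvd_mono[OF E dvd_trans[OF u dvd_power[of i u]]] False by (simp add: mult.commute)
      moreover have "fps_X ^ (n + 1) dvd u * E"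
        using mult_dvd_mono[OF u E] by (simp add: power_add mult.commute)
      moreover have "fps_X ^ (n + 1) dvd E * E"
        using mult_dvd_mono[OF E E] le_imp_power_dvd[of "n + 1" "n + n" "fps_X :: 'a fps"] n
        by (auto simp: power_add intro: dvd_trans)
      ultimately show ?thesis
        by (auto simp: algebra_simps)
    qed
    ultimately have "fps_cong (n + 1) ((u + E) ^ Suc i) (u ^ Suc i)"
      unfolding fps_cong_iff_dvd[symmetric] by (rule fps_cong_trans)
    then show ?thesis
      using False by simp
  qed simp
qed simp

lemma fps_compose_add_small:
  fixes u E :: "'a::comm_ring_1 fps"
  assumes "fps_X dvd u" "fps_X ^ n dvd E" "n \<ge> 1"
  shows "fps_cong (n + 1) (f oo (u + E)) ((f oo u) + fps_const (f $ 1) * E)"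
  unfolding fps_cong_def
proof (intro allI impI)
  fix m assume m: "m < n + 1"
  have E0: "E $ 0 = 0"
    using assms(2,3) by (auto simp: fps_X_power_dvd_iff)
  have "(f oo (u + E)) $ m = (\<Sum>i=0..m. f $ i * ((u ^ i) $ m + (if i = 1 then E $ m else 0)))"
    unfolding fps_compose_nth using fps_cong_power_add_small[OF assms] m
    by (intro sum.cong) (auto simp: fps_cong_def)
  also have "\<dots> = (f oo u) $ m + f $ 1 * E $ m"
    using E0 by (cases "m = 0") (auto simp: fps_compose_nth distrib_left sum.distrib mult_delta_right)
  finally show "(f oo (u + E)) $ m = ((f oo u) + fps_const (f $ 1) * E) $ m"
    by simp
qed

lemma fps_compose_small:
  fixes E :: "'a::comm_ring_1 fps"
  assumes "fps_X ^ n dvd E" "A $ 0 = 0"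
  shows "fps_cong (n + 1) (E oo A) (fps_const (E $ n * (A $ 1) ^ n) * fps_X ^ n)"
  unfolding fps_cong_def
proof (intro allI impI)
  fix m assume "m < n + 1"
  have "(E oo A) $ m = (\<Sum>i=0..m. if i = n then E $ n * (A ^ n) $ m else 0)"
    unfolding fps_compose_nth using assms \<open>m < n + 1\<close>
    by (intro sum.cong) (auto simp: fps_X_power_dvd_iff)
  also have "\<dots> = (fps_const (E $ n * (A $ 1) ^ n) * fps_X ^ n) $ m"
    using \<open>m < n + 1\<close> assms(2)
    by (cases "m = n") (auto simp: startsby_zero_power_nth_same startsby_zero_power_prefix)
  finally show "(E oo A) $ m = (fps_const (E $ n * (A $ 1) ^ n) * fps_X ^ n) $ m" .
qed

lemma fps_inv_nth_0 [simp]: "fps_inv (h :: 'a::field fps) $ 0 = 0"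
  by (simp add: fps_inv_def)

lemma fps_inv_nth_1: "fps_inv (h :: 'a::field fps) $ 1 = 1 / h $ 1"
  by (simp add: fps_inv_def)

lemma fps_compose_nth_1: "g $ 0 = 0 \<Longrightarrow> (f oo g) $ 1 = f $ 1 * g $ 1"
  by (simp add: fps_compose_nth)

lemma conjugate_iff_commute:
  fixes h g G :: "'a::field fps"
  assumes h: "h $ 0 = 0" "h $ 1 \<noteq> 0" and g: "g $ 0 = 0"
  shows "G = h oo g oo fps_inv h \<longleftrightarrow> G oo h = h oo g"
proof
  assume "G = h oo g oo fps_inv h"
  then have "G oo h = (h oo g) oo (fps_inv h oo h)"
    using h g by (simp add: fps_compose_assoc)
  then show "G oo h = h oo g"
    using fps_inv[OF h] by simp
next
  assume comm: "G oo h = h oo g"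
  have "G = G oo (h oo fps_inv h)"
    using fps_inv_right[OF h] by simp
  also have "\<dots> = h oo g oo fps_inv h"
    using comm h by (simp add: fps_compose_assoc)
  finally show "G = h oo g oo fps_inv h" .
qed

lemma fps_iter_nth_0 [simp]: "g $ 0 = 0 \<Longrightarrow> fps_iter g m $ 0 = 0"
  by (induction m) auto

lemma fps_iter_nth_1: "g $ 0 = 0 \<Longrightarrow> fps_iter g m $ 1 = (g $ 1) ^ m"
  by (induction m) (simp_all add: fps_compose_nth)

lemma fps_iter_commute:
  fixes h g G :: "'a::field fps"
  assumes comm: "G oo h = h oo g" and "h $ 0 = 0" "g $ 0 = 0" "G $ 0 = 0"
  shows "fps_iter G m oo h = h oo fps_iter g m"
proof (induction m)
  case (Suc m)
  have "fps_iter G (Suc m) oo h = G oo (fps_iter G m oo h)"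
    using assms by (simp add: fps_compose_assoc)
  also have "\<dots> = (G oo h) oo fps_iter g m"
    using Suc assms by (simp add: fps_compose_assoc)
  also have "\<dots> = h oo fps_iter g (Suc m)"
    using comm assms by (simp add: fps_compose_assoc)
  finally show ?case .
qed (use assms in simp)

section \<open>Roots of unity\<close>

lemma primitive_root_power_eq_1_imp_dvd:
  fixes \<gamma> :: "'a::field"
  assumes "\<gamma> ^ q = 1" "\<forall>m. 0 < m \<and> m < q \<longrightarrow> \<gamma> ^ m \<noteq> 1" "q > 0" "\<gamma> ^ k = 1"
  shows "q dvd k"
proof -
  have "\<gamma> ^ k = (\<gamma> ^ q) ^ (k div q) * \<gamma> ^ (k mod q)"
    by (simp only: power_mult[symmetric] power_add[symmetric] mult_div_mod_eq)
  then have "\<gamma> ^ (k mod q) = 1"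
    using assms(1,4) by simp
  moreover have "k mod q < q"
    using assms(3) by simp
  ultimately have "k mod q = 0"
    using assms(2) by (meson neq0_conv)
  then show ?thesis
    by (rule mod_0_imp_dvd)
qed

lemma primitive_root_power_eq_self:
  fixes \<gamma> :: "'a::field"
  assumes root: "\<gamma> ^ q = 1" "\<forall>m. 0 < m \<and> m < q \<longrightarrow> \<gamma> ^ m \<noteq> 1" "q > 0" and n: "\<gamma> ^ n = \<gamma>"
  shows "n mod q = 1 mod q"
proof (cases n)
  case 0
  then have "\<not> 1 < q"
    using root(2) n by force
  then have "q = 1"
    using root(3) by linarith
  then show ?thesis
    by simp
next
  case (Suc k)
  have "\<gamma> \<noteq> 0"
    using root(1,3) by (auto simp: power_0_left)
  then have "\<gamma> ^ k = 1"
    using n Suc by simp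
  then have "q dvd k"
    by (rule primitive_root_power_eq_1_imp_dvd[OF root])
  then show ?thesis
    using Suc mod_eq_dvd_iff_nat[of 1 n q] by simp
qed

text \<open>The order of a root of unity in characteristic \<open>p\<close> is prime to \<open>p\<close>, because
  \<open>x\<^sup>p = 1\<close> forces \<open>(x - 1)\<^sup>p = 0\<close>.\<close>

lemma primitive_root_order_neq_0:
  fixes \<gamma> :: "'a::field"
  assumes "prime p" "CHAR('a) = p"
    and "q > 0" "\<gamma> ^ q = 1" "\<forall>m. 0 < m \<and> m < q \<longrightarrow> \<gamma> ^ m \<noteq> 1"
  shows "(of_nat q :: 'a) \<noteq> 0"
proof
  assume "(of_nat q :: 'a) = 0"
  then have "p dvd q"
    using assms(2) of_nat_eq_0_iff_char_dvd by metis
  then obtain r where r: "q = p * r" ..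
  have "r > 0" "r < q"
    using r assms(1,3) prime_gt_1_nat[of p] by (auto intro: less_le_trans[of r "2 * r"])
  have "(\<gamma> ^ r - 1 + 1) ^ p = (\<gamma> ^ r - 1) ^ p + 1 ^ p"
    by (rule freshmans_dream) (use assms(1,2) in auto)
  moreover have "(\<gamma> ^ r) ^ p = 1"
    using r assms(4) by (simp add: power_mult[symmetric] mult.commute)
  ultimately have "\<gamma> ^ r = 1"
    by simp
  then show False
    using assms(5) \<open>r > 0\<close> \<open>r < q\<close> by blast
qed

section \<open>Series supported on \<open>1 + q\<int>\<close>\<close>

definition supported_mod :: "nat \<Rightarrow> nat \<Rightarrow> 'a::comm_ring_1 fps \<Rightarrow> bool" where
  "supported_mod q r f \<longleftrightarrow> (\<forall>n. n mod q \<noteq> r mod q \<longrightarrow> f $ n = 0)"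

lemma supported_mod_mult:
  assumes "supported_mod q r f" "supported_mod q s g"
  shows "supported_mod q (r + s) (f * g)"
  unfolding supported_mod_def
proof (intro allI impI)
  fix n assume n: "n mod q \<noteq> (r + s) mod q"
  have "f $ i * g $ (n - i) = 0" if "i \<le> n" for i
  proof (cases "i mod q = r mod q \<and> (n - i) mod q = s mod q")
    case True
    then have "(i + (n - i)) mod q = (r + s) mod q"
      by (intro mod_add_cong) auto
    then show ?thesis
      using \<open>i \<le> n\<close> n by simp
  qed (use assms in \<open>auto simp: supported_mod_def\<close>)
  then show "(f * g) $ n = 0"
    unfolding fps_mult_nth by (intro sum.neutral) auto
qed

lemma supported_mod_power: "supported_mod q r f \<Longrightarrow> supported_mod q (m * r) (f ^ m)"
proof (induction m)
  case 0
  then show ?case by (auto simp: supported_mod_def)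
next
  case (Suc m)
  then show ?case using supported_mod_mult[of q r f "m * r" "f ^ m"] by (simp add: add.commute)
qed

lemma supported_mod_compose:
  assumes f: "supported_mod q 1 f" and g: "supported_mod q 1 g"
  shows "supported_mod q 1 (f oo g)"
  unfolding supported_mod_def fps_compose_nth
proof (intro allI impI sum.neutral ballI)
  fix n i assume n: "n mod q \<noteq> 1 mod q"
  show "f $ i * (g ^ i) $ n = 0"
  proof (cases "i mod q = 1 mod q")
    case True
    then have "n mod q \<noteq> (i * 1) mod q"
      using n by simp
    then show ?thesis
      using supported_mod_power[OF g, of i] by (simp add: supported_mod_def)
  qed (use f in \<open>simp add: supported_mod_def\<close>)
qed

lemma supported_mod_fps_iter: "supported_mod q 1 g \<Longrightarrow> supported_mod q 1 (fps_iter g m)"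
proof (induction m)
  case 0
  then show ?case by (auto simp: supported_mod_def)
next
  case (Suc m)
  then show ?case
    using supported_mod_compose[of q g "fps_iter g m"] by simp
qed

lemma normal_form_nth:
  fixes n :: nat
  shows "q > 0 \<Longrightarrow> normal_form \<gamma> q a $ n =
     (if n = 0 then 0 else if n = 1 then \<gamma> else if q dvd (n - 1) then \<gamma> * a ((n - 1) div q) else 0)"
  unfolding normal_form_def mult.assoc fps_mult_left_const_nth fps_X_mult_nth by auto

lemma mod_eq_1_iff_dvd: "(n :: nat) \<ge> 1 \<Longrightarrow> n mod q = 1 mod q \<longleftrightarrow> q dvd (n - 1)"
  using mod_eq_dvd_iff_nat[of 1 n q] by simp

lemma supported_mod_normal_form: "q > 0 \<Longrightarrow> supported_mod q 1 (normal_form \<gamma> q a)"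
  unfolding supported_mod_def
proof (intro allI impI)
  fix n assume "q > 0" "n mod q \<noteq> 1 mod q"
  then have "n \<noteq> 1" "\<not> (n \<ge> 1 \<and> q dvd (n - 1))"
    using mod_eq_1_iff_dvd[of n q] by auto
  then show "normal_form \<gamma> q a $ n = 0"
    using \<open>q > 0\<close> by (auto simp: normal_form_nth)
qed

lemma supported_mod_eq_normal_form:
  assumes "q > 0" "\<gamma> \<noteq> 0" "G $ 0 = 0" "G $ 1 = \<gamma>" "supported_mod q 1 G"
  shows "G = normal_form \<gamma> q (\<lambda>j. G $ (j * q + 1) / \<gamma>)"
proof (rule fps_ext)
  fix n
  consider "n = 0" | "n = 1" | "n \<ge> 2" "q dvd (n - 1)" | "n \<ge> 2" "\<not> q dvd (n - 1)"
    by linarith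
  then show "G $ n = normal_form \<gamma> q (\<lambda>j. G $ (j * q + 1) / \<gamma>) $ n"
  proof cases
    case 3
    then have "(n - 1) div q * q + 1 = n" by simp
    then show ?thesis using 3 assms(1,2) by (simp add: normal_form_nth)
  next
    case 4
    then have "n mod q \<noteq> 1 mod q"
      using mod_eq_1_iff_dvd[of n q] by simp
    then show ?thesis
      using 4 assms(1,5) by (simp add: normal_form_nth supported_mod_def)
  qed (use assms in \<open>simp_all add: normal_form_nth\<close>)
qed

lemma mod_eq_1_cases_le:
  fixes i q :: nat
  assumes "q > 0" "i mod q = 1 mod q" "0 < i" "i \<le> 2 * q + 1"
  shows "i = 1 \<or> i = q + 1 \<or> i = 2 * q + 1"
proof -
  obtain t where t: "i - 1 = q * t"
    using assms(2,3) mod_eq_1_iff_dvd[of i q] by auto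
  then have "q * t \<le> q * 2"
    using assms(4) by linarith
  then have "t \<le> 2"
    using assms(1) by simp
  then have "t = 0 \<or> t = 1 \<or> t = 2" by auto
  then show ?thesis
    using t assms(3) by auto
qed

lemma power_Suc_add_expand:
  fixes x y :: "'a::comm_ring_1"
  shows "\<exists>R. (x + y) ^ Suc m = x ^ Suc m + of_nat (Suc m) * x ^ m * y + y\<^sup>2 * R"
proof (induction m)
  case (Suc m)
  then obtain R where R: "(x + y) ^ Suc m = x ^ Suc m + of_nat (Suc m) * x ^ m * y + y\<^sup>2 * R" ..
  have "(x + y) ^ Suc (Suc m) = x ^ Suc (Suc m) + of_nat (Suc (Suc m)) * x ^ Suc m * y
      + y\<^sup>2 * (x * R + of_nat (Suc m) * x ^ m + y * R)"
    unfolding power_Suc[of _ "Suc m"] R by (simp add: algebra_simps power2_eq_square)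
  then show ?case ..
qed (auto intro: exI[of _ 0])

text \<open>The extra degree \<open>q\<close> in \<open>B^(m+1)\<close> must come from a single factor contributing its
  coefficient of \<open>X^(q+1)\<close>.\<close>

lemma fps_power_nth_Suc_add:
  fixes B :: "'a::comm_ring_1 fps"
  assumes B: "B $ 0 = 0" "\<forall>j. 1 < j \<and> j \<le> q \<longrightarrow> B $ j = 0" and "q > 0"
  shows "(B ^ Suc m) $ (Suc m + q) = of_nat (Suc m) * (B $ 1) ^ m * B $ (q + 1)"
proof -
  define K where "K = fps_const (B $ 1)"
  define D where "D = fps_shift 1 B - K"
  have "B = fps_X * (K + D)"
    using B(1) by (intro fps_ext) (simp add: D_def)
  then have "(B ^ Suc m) $ (Suc m + q) = ((K + D) ^ Suc m) $ q"
    by (simp only: power_mult_distrib fps_X_power_mult_nth) simp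
  obtain R where R: "(K + D) ^ Suc m = K ^ Suc m + of_nat (Suc m) * K ^ m * D + D\<^sup>2 * R"
    using power_Suc_add_expand by blast
  have "fps_X ^ q dvd D"
    using B by (auto simp: fps_X_power_dvd_iff D_def K_def)
  then have "fps_X ^ (q + q) dvd D\<^sup>2 * R"
    by (simp add: power_add power2_eq_square mult_dvd_mono)
  then have "(D\<^sup>2 * R) $ q = 0"
    using \<open>q > 0\<close> by (auto simp: fps_X_power_dvd_iff)
  moreover have "(of_nat (Suc m) * K ^ m * D) $ q = of_nat (Suc m) * (B $ 1) ^ m * B $ (q + 1)"
    using \<open>q > 0\<close> by (simp add: K_def D_def fps_of_nat[symmetric] mult.assoc)
  moreover have "(K ^ Suc m) $ q = 0"
    using \<open>q > 0\<close> by (simp add: K_def)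
  ultimately show ?thesis
    using \<open>(B ^ Suc m) $ (Suc m + q) = _\<close> by (simp only: R fps_add_nth) simp
qed

lemma supported_mod_gap:
  assumes "supported_mod q 1 B" "1 < j" "j \<le> q"
  shows "B $ j = 0"
proof -
  have "j mod q \<noteq> 1 mod q"
    using assms(2,3) by (cases "j = q") auto
  then show ?thesis
    using assms(1) by (simp add: supported_mod_def)
qed

lemma supported_mod_compose_nth:
  fixes A B :: "'a::comm_ring_1 fps"
  assumes A: "supported_mod q 1 A" "A $ 0 = 0" and B: "supported_mod q 1 B" "B $ 0 = 0"
    and "q > 0"
  shows "(A oo B) $ (q + 1) = A $ 1 * B $ (q + 1) + A $ (q + 1) * (B $ 1) ^ (q + 1)"
    and "(A oo B) $ (2 * q + 1) = A $ 1 * B $ (2 * q + 1)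
           + of_nat (q + 1) * A $ (q + 1) * (B $ 1) ^ q * B $ (q + 1)
           + A $ (2 * q + 1) * (B $ 1) ^ (2 * q + 1)"
proof -
  have reduce: "(A oo B) $ n = (\<Sum>i\<in>S. A $ i * (B ^ i) $ n)"
    if "S \<subseteq> {0..n}" "\<And>i. i \<le> n \<Longrightarrow> 0 < i \<Longrightarrow> i mod q = 1 mod q \<Longrightarrow> i \<in> S" for n S
    unfolding fps_compose_nth
  proof (rule sum.mono_neutral_right)
    show "\<forall>i\<in>{0..n} - S. A $ i * (B ^ i) $ n = 0"
      using that(2) A by (force simp: supported_mod_def)
  qed (use that(1) in auto)
  have gap: "\<forall>j. 1 < j \<and> j \<le> q \<longrightarrow> B $ j = 0"
    using supported_mod_gap[OF B(1)] by blast
  have "(A oo B) $ (q + 1) = (\<Sum>i\<in>{1, q + 1}. A $ i * (B ^ i) $ (q + 1))"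
    by (rule reduce) (use \<open>q > 0\<close> mod_eq_1_cases_le[of q] in fastforce)+
  then show "(A oo B) $ (q + 1) = A $ 1 * B $ (q + 1) + A $ (q + 1) * (B $ 1) ^ (q + 1)"
    using \<open>q > 0\<close> B(2) by (simp add: startsby_zero_power_nth_same del: power_Suc)
  have "(A oo B) $ (2 * q + 1) = (\<Sum>i\<in>{1, q + 1, 2 * q + 1}. A $ i * (B ^ i) $ (2 * q + 1))"
    by (rule reduce) (use \<open>q > 0\<close> mod_eq_1_cases_le[of q] in fastforce)+
  moreover have "(B ^ (q + 1)) $ (2 * q + 1) = of_nat (q + 1) * (B $ 1) ^ q * B $ (q + 1)"
    using fps_power_nth_Suc_add[OF B(2) gap \<open>q > 0\<close>, of q] by (simp add: mult_2)
  ultimately show "(A oo B) $ (2 * q + 1) = A $ 1 * B $ (2 * q + 1)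
           + of_nat (q + 1) * A $ (q + 1) * (B $ 1) ^ q * B $ (q + 1)
           + A $ (2 * q + 1) * (B $ 1) ^ (2 * q + 1)"
    using \<open>q > 0\<close> B(2) by (simp add: startsby_zero_power_nth_same algebra_simps del: power_Suc)
qed

section \<open>The \<open>q\<close>-th iterate\<close>

lemma supported_mod_fps_iter_nth:
  fixes N :: "'a::field fps"
  assumes N: "supported_mod q 1 N" "N $ 0 = 0" "N $ 1 = \<gamma>" "N $ (q + 1) = \<gamma> * b"
    and "\<gamma> ^ q = 1" "q > 0"
  shows "fps_iter N m $ (q + 1) = of_nat m * \<gamma> ^ m * b"
proof (induction m)
  case (Suc m)
  have "(\<gamma> ^ m) ^ (q + 1) = \<gamma> ^ m"
    using \<open>\<gamma> ^ q = 1\<close> by (simp add: power_mult[symmetric] mult.commute[of m] power_mult power_add)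
  moreover have "fps_iter N (Suc m) $ (q + 1) = \<gamma> * fps_iter N m $ (q + 1) + \<gamma> * b * (\<gamma> ^ m) ^ (q + 1)"
    using supported_mod_compose_nth(1)[OF N(1,2) supported_mod_fps_iter[OF N(1)] _ \<open>q > 0\<close>]
      N(2-4) fps_iter_nth_1[OF N(2), of m] by simp
  ultimately show ?case
    using Suc by (simp add: algebra_simps)
qed (use \<open>q > 0\<close> in simp)

lemma supported_mod_fps_iter_tangent:
  fixes N :: "'a::field fps"
  assumes N: "supported_mod q 1 N" "N $ 0 = 0" "N $ 1 = \<gamma>" "N $ (q + 1) = \<gamma> * b"
    and "\<gamma> ^ q = 1" "q > 0"
  shows "fps_cong (q + 2) (fps_iter N q) (fps_X + fps_const (of_nat q * b) * fps_X ^ (q + 1))"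
  unfolding fps_cong_def
proof (intro allI impI)
  fix i assume "i < q + 2"
  then consider "i = 0" | "i = 1" | "1 < i" "i \<le> q" | "i = q + 1"
    by linarith
  then show "fps_iter N q $ i = (fps_X + fps_const (of_nat q * b) * fps_X ^ (q + 1)) $ i"
  proof cases
    case 3
    then show ?thesis
      using supported_mod_gap[OF supported_mod_fps_iter[OF N(1)]] by simp
  qed (use assms supported_mod_fps_iter_nth[OF assms] fps_iter_nth_1[OF N(2), of q] in simp_all)
qed

lemma fps_cong_conj_tangent:
  fixes F G h :: "'a::field fps"
  assumes h: "h $ 0 = 0" "h $ 1 \<noteq> 0" and F: "F $ 0 = 0" and comm: "G oo h = h oo F"
    and G: "fps_cong (k + 1) G (fps_X + fps_const e * fps_X ^ k)" and "k \<ge> 1"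
  shows "fps_cong (k + 1) F (fps_X + fps_const (e * (h $ 1) ^ (k - 1)) * fps_X ^ k)"
proof -
  define B where "B = G - fps_X"
  have B: "fps_X ^ k dvd B" "B $ k = e"
    using G \<open>k \<ge> 1\<close> by (auto simp: fps_cong_def fps_X_power_dvd_iff B_def)
  have G0: "G $ 0 = 0"
    using G \<open>k \<ge> 1\<close> by (auto simp: fps_cong_def)
  have "F = (fps_inv h oo h) oo F"
    using fps_inv[OF h] F by simp
  also have "\<dots> = fps_inv h oo (G oo h)"
    using comm h F G0 by (simp add: fps_compose_assoc)
  also have "\<dots> = (fps_inv h oo (fps_X + B)) oo h"
    using h G0 by (simp add: B_def fps_compose_assoc)
  also have "fps_cong (k + 1) \<dots> ((fps_inv h + fps_const (fps_inv h $ 1) * B) oo h)"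
    using fps_compose_add_small[of fps_X k B "fps_inv h"] B(1) \<open>k \<ge> 1\<close>
    by (intro fps_cong_compose_right) simp
  also have "(fps_inv h + fps_const (fps_inv h $ 1) * B) oo h = fps_X + fps_const (1 / h $ 1) * (B oo h)"
    using fps_inv[OF h] h(1) fps_inv_nth_1[of h]
    by (simp add: fps_compose_add_distrib fps_compose_mult_distrib)
  also have "fps_cong (k + 1) \<dots> (fps_X + fps_const (1 / h $ 1) * (fps_const (e * (h $ 1) ^ k) * fps_X ^ k))"
    using fps_compose_small[OF B(1) h(1)] B(2) by (intro fps_cong_add fps_cong_mult) auto
  also have "\<dots> = fps_X + fps_const (e * (h $ 1) ^ (k - 1)) * fps_X ^ k"
    using h(2) \<open>k \<ge> 1\<close> by (simp add: power_eq_if)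
  finally show ?thesis .
qed

lemma fps_shift_1_diff_X_eq_0_iff:
  fixes F :: "'a::comm_ring_1 fps"
  assumes "F $ 0 = 0"
  shows "fps_shift 1 (F - fps_X) = 0 \<longleftrightarrow> F = fps_X"
proof
  assume S: "fps_shift 1 (F - fps_X) = 0"
  have "(F - fps_X) $ n = 0" for n
  proof (cases n)
    case (Suc m)
    then show ?thesis
      using arg_cong[OF S, of "\<lambda>f. f $ m"] by simp
  qed (simp add: assms)
  then show "F = fps_X"
    by (simp add: fps_eq_iff)
qed simp

lemma i0_eq_iff_coeff:
  fixes F :: "'a::field fps"
  assumes "fps_cong (k + 2) F (fps_X + fps_const d * fps_X ^ (k + 1))"
  shows "i0 F = enat k \<longleftrightarrow> d \<noteq> 0"
proof -
  define S where "S = fps_shift 1 (F - fps_X)"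
  have S: "\<forall>i<k. S $ i = 0" "S $ k = d" and F0: "F $ 0 = 0"
    using assms by (auto simp: fps_cong_def S_def)
  show ?thesis
  proof
    assume "i0 F = enat k"
    then have "F \<noteq> fps_X" "subdegree S = k"
      by (auto simp: i0_def S_def split: if_splits)
    moreover have "S \<noteq> 0"
      using \<open>F \<noteq> fps_X\<close> fps_shift_1_diff_X_eq_0_iff[OF F0] by (simp add: S_def)
    ultimately show "d \<noteq> 0"
      using S(2) nth_subdegree_nonzero by metis
  next
    assume "d \<noteq> 0"
    then have "F \<noteq> fps_X"
      using S(2) by (auto simp: S_def)
    moreover have "subdegree S = k"
      using S \<open>d \<noteq> 0\<close> by (intro subdegreeI) auto
    ultimately show "i0 F = enat k"
      by (simp add: i0_def S_def)
  qed
qed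

section \<open>Conjugacies between supported series\<close>

text \<open>Split \<open>H\<close> into its part supported on \<open>1 + q\<int>\<close> and a remainder \<open>E = O(X\<^sup>n)\<close>:
  the supported parts of \<open>H \<circ> A\<close> and \<open>B \<circ> H\<close> do not reach \<open>X\<^sup>n\<close>, while \<open>E\<close> contributes
  \<open>E\<^sub>n \<gamma>\<^sup>n\<close> and \<open>\<gamma> E\<^sub>n\<close> respectively.\<close>

lemma commute_first_unsupported_coeff:
  fixes H A B :: "'a::comm_ring_1 fps"
  assumes comm: "H oo A = B oo H" and H0: "H $ 0 = 0"
    and A: "supported_mod q 1 A" "A $ 0 = 0" "A $ 1 = \<gamma>"
    and B: "supported_mod q 1 B" "B $ 0 = 0" "B $ 1 = \<gamma>"
    and n: "n \<noteq> 0" "n mod q \<noteq> 1 mod q"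
    and below: "\<And>j. j < n \<Longrightarrow> j mod q \<noteq> 1 mod q \<Longrightarrow> H $ j = 0"
  shows "H $ n * \<gamma> ^ n = \<gamma> * H $ n"
proof -
  define Hr where "Hr = Abs_fps (\<lambda>j. if j mod q = 1 mod q then H $ j else 0)"
  define E where "E = H - Hr"
  have Hr: "supported_mod q 1 Hr" "fps_X dvd Hr"
    using H0 by (auto simp: supported_mod_def Hr_def fps_X_power_dvd_iff[of 1, simplified])
  have E: "fps_X ^ n dvd E" "E $ n = H $ n"
    using below n(2) by (auto simp: fps_X_power_dvd_iff E_def Hr_def)
  have "(H oo A) $ n = (Hr oo A) $ n + (E oo A) $ n"
    by (simp add: E_def fps_compose_sub_distrib)
  also have "\<dots> = H $ n * \<gamma> ^ n"
    using supported_mod_compose[OF Hr(1) A(1)] n(2) fps_compose_small[OF E(1) A(2)] E(2) A(3)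
    by (simp add: supported_mod_def fps_cong_def)
  finally have lhs: "(H oo A) $ n = H $ n * \<gamma> ^ n" .
  have "fps_cong (n + 1) (B oo (Hr + E)) ((B oo Hr) + fps_const (B $ 1) * E)"
    using fps_compose_add_small[OF Hr(2) E(1)] n(1) by simp
  then have "(B oo H) $ n = (B oo Hr) $ n + \<gamma> * E $ n"
    using B(3) by (simp add: E_def fps_cong_def)
  also have "\<dots> = \<gamma> * H $ n"
    using supported_mod_compose[OF B(1) Hr(1)] n(2) E(2) by (simp add: supported_mod_def)
  finally show ?thesis
    using comm lhs by simp
qed

lemma commute_imp_supported_mod:
  fixes H A B :: "'a::idom fps"
  assumes comm: "H oo A = B oo H" and H0: "H $ 0 = 0"
    and A: "supported_mod q 1 A" "A $ 0 = 0" "A $ 1 = \<gamma>"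
    and B: "supported_mod q 1 B" "B $ 0 = 0" "B $ 1 = \<gamma>"
    and non_resonant: "\<And>n. n mod q \<noteq> 1 mod q \<Longrightarrow> \<gamma> ^ n \<noteq> \<gamma>"
  shows "supported_mod q 1 H"
proof -
  have "n mod q \<noteq> 1 mod q \<longrightarrow> H $ n = 0" for n
  proof (induction n rule: less_induct)
    case (less n)
    show ?case
    proof (intro impI)
      assume n: "n mod q \<noteq> 1 mod q"
      show "H $ n = 0"
      proof (cases "n = 0")
        case False
        then have "H $ n * \<gamma> ^ n = H $ n * \<gamma>"
          using commute_first_unsupported_coeff[OF comm H0 A B False n] less.IH
          by (simp add: mult.commute)
        then show ?thesis
          using non_resonant[OF n] by simp
      qed (simp add: H0)
    qed
  qed
  then show ?thesis
    by (simp add: supported_mod_def)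
qed

section \<open>Formal normalization\<close>

lemma fps_cong_diagonal:
  fixes S :: "nat \<Rightarrow> 'a::comm_ring_1 fps"
  assumes "\<And>n. fps_cong (Suc n) (S (Suc n)) (S n)"
  shows "fps_cong (Suc n) (Abs_fps (\<lambda>i. S i $ i)) (S n)"
proof -
  have stable: "fps_cong (Suc n) (S m) (S n)" if "n \<le> m" for n m
    using that
  proof (induction m rule: dec_induct)
    case (step m)
    have "fps_cong (Suc n) (S (Suc m)) (S m)"
      using fps_cong_mono[OF assms[of m]] step.hyps by simp
    then show ?case
      using step.IH fps_cong_trans by blast
  qed simp
  show ?thesis
    unfolding fps_cong_def
  proof (intro allI impI)
    fix i assume "i < Suc n"
    then have "fps_cong (Suc i) (S n) (S i)"
      by (intro stable) simp
    then show "Abs_fps (\<lambda>i. S i $ i) $ i = S n $ i"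
      by (simp add: fps_cong_def)
  qed
qed

definition X_plus_monom :: "'a::comm_ring_1 \<Rightarrow> nat \<Rightarrow> 'a fps" where
  "X_plus_monom c k = fps_X + fps_const c * fps_X ^ k"

lemma X_plus_monom_nth: "X_plus_monom c k $ n = (if n = 1 then 1 else 0) + (if n = k then c else 0)"
  by (simp add: X_plus_monom_def)

lemma X_plus_monom_conj:
  fixes G G' :: "'a::idom fps"
  assumes comm: "G' oo X_plus_monom c k = X_plus_monom c k oo G" and "k \<ge> 2"
    and "G $ 0 = 0"
  shows "fps_cong k G' G" "G' $ k = G $ k + c * ((G $ 1) ^ k - G $ 1)"
proof -
  have "fps_cong (k + 1) (G' oo X_plus_monom c k) (G' + fps_const (G' $ 1) * (fps_const c * fps_X ^ k))"
    using fps_compose_add_small[of fps_X k "fps_const c * fps_X ^ k" G'] \<open>k \<ge> 2\<close>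
    by (simp add: X_plus_monom_def)
  moreover have "fps_cong (k + 1) (X_plus_monom c k oo G)
      (G + fps_const c * (fps_const ((G $ 1) ^ k) * fps_X ^ k))"
  proof -
    have "X_plus_monom c k oo G = G + fps_const c * (fps_X ^ k oo G)"
      using \<open>G $ 0 = 0\<close>
      by (simp add: X_plus_monom_def fps_compose_add_distrib fps_compose_mult_distrib[OF \<open>G $ 0 = 0\<close>])
    also have "fps_cong (k + 1) \<dots> (G + fps_const c * (fps_const ((G $ 1) ^ k) * fps_X ^ k))"
      using fps_compose_small[of k "fps_X ^ k" G] \<open>G $ 0 = 0\<close> by (intro fps_cong_add fps_cong_mult) auto
    finally show ?thesis .
  qed
  ultimately have eq: "\<forall>i<k + 1. (G' + fps_const (G' $ 1) * (fps_const c * fps_X ^ k)) $ i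
      = (G + fps_const c * (fps_const ((G $ 1) ^ k) * fps_X ^ k)) $ i"
    using comm by (auto simp: fps_cong_def)
  show "fps_cong k G' G"
    unfolding fps_cong_def
  proof (intro allI impI)
    fix i assume "i < k"
    then show "G' $ i = G $ i"
      using eq[rule_format, of i] by simp
  qed
  then have "G' $ 1 = G $ 1"
    using \<open>k \<ge> 2\<close> by (simp add: fps_cong_def)
  then show "G' $ k = G $ k + c * ((G $ 1) ^ k - G $ 1)"
    using eq[rule_format, of k] by (simp add: algebra_simps)
qed

definition killing_coeff :: "'a::field \<Rightarrow> nat \<Rightarrow> 'a fps \<Rightarrow> nat \<Rightarrow> 'a" where
  "killing_coeff \<gamma> q G k = (if k mod q = 1 mod q then 0 else G $ k / (\<gamma> - \<gamma> ^ k))"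

primrec normalizer :: "'a::field fps \<Rightarrow> 'a \<Rightarrow> nat \<Rightarrow> nat \<Rightarrow> 'a fps" where
  "normalizer g \<gamma> q 0 = fps_X"
| "normalizer g \<gamma> q (Suc n) =
     X_plus_monom (killing_coeff \<gamma> q (normalizer g \<gamma> q n oo g oo fps_inv (normalizer g \<gamma> q n)) (n + 2))
       (n + 2) oo normalizer g \<gamma> q n"

definition normalized :: "'a::field fps \<Rightarrow> 'a \<Rightarrow> nat \<Rightarrow> nat \<Rightarrow> 'a fps" where
  "normalized g \<gamma> q n = normalizer g \<gamma> q n oo g oo fps_inv (normalizer g \<gamma> q n)"

lemma normalizer_Suc:
  "normalizer g \<gamma> q (Suc n) =
     X_plus_monom (killing_coeff \<gamma> q (normalized g \<gamma> q n) (n + 2)) (n + 2) oo normalizer g \<gamma> q n"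
  by (simp add: normalized_def)

declare normalizer.simps(2) [simp del]

lemma normalizer_nth_0_1: "normalizer g \<gamma> q n $ 0 = 0" "normalizer g \<gamma> q n $ 1 = 1"
  by (induction n) (simp_all add: normalizer_Suc fps_compose_nth X_plus_monom_nth)

lemma normalizer_cong: "fps_cong (Suc n) (normalizer g \<gamma> q (Suc n)) (normalizer g \<gamma> q n)"
proof -
  have step: "fps_cong (Suc n) (X_plus_monom c (n + 2) oo normalizer g \<gamma> q n) (normalizer g \<gamma> q n)"
    for c
    using fps_cong_compose_right[of "Suc n" "X_plus_monom c (n + 2)" fps_X "normalizer g \<gamma> q n"]
      normalizer_nth_0_1(1)[of g \<gamma> q n]
    by (simp add: fps_cong_def X_plus_monom_nth)
  show ?thesis
    unfolding normalizer_Suc by (rule step)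
qed

context
  fixes g :: "'a::field fps" and \<gamma> :: 'a and q :: nat
  assumes g0: "g $ 0 = 0" and g1: "g $ 1 = \<gamma>"
    and non_resonant: "\<And>n. n mod q \<noteq> 1 mod q \<Longrightarrow> \<gamma> ^ n \<noteq> \<gamma>"
begin

lemma normalized_nth_0: "normalized g \<gamma> q n $ 0 = 0"
  by (simp add: normalized_def normalizer_nth_0_1)

lemma normalized_commute: "normalized g \<gamma> q n oo normalizer g \<gamma> q n = normalizer g \<gamma> q n oo g"
proof -
  have "normalizer g \<gamma> q n $ 1 \<noteq> 0"
    using normalizer_nth_0_1(2)[of g \<gamma> q n] by simp
  then show ?thesis
    using conjugate_iff_commute[OF normalizer_nth_0_1(1) _ g0] unfolding normalized_def by blast
qed

lemma normalized_step:
  fixes n :: nat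
  defines "T \<equiv> X_plus_monom (killing_coeff \<gamma> q (normalized g \<gamma> q n) (n + 2)) (n + 2)"
  shows "normalized g \<gamma> q (Suc n) oo T = T oo normalized g \<gamma> q n"
proof -
  let ?H = "normalizer g \<gamma> q n"
  have T0: "T $ 0 = 0"
    by (simp add: T_def X_plus_monom_nth)
  have H0: "?H $ 0 = 0" and H1: "?H $ 1 \<noteq> 0"
    using normalizer_nth_0_1[of g \<gamma> q n] by simp_all
  have "(normalized g \<gamma> q (Suc n) oo T) oo ?H = normalized g \<gamma> q (Suc n) oo (T oo ?H)"
    using fps_compose_assoc[OF H0 T0] by simp
  also have "\<dots> = (T oo ?H) oo g"
    using normalized_commute[of "Suc n"] by (simp add: normalizer_Suc T_def)
  also have "\<dots> = T oo (normalized g \<gamma> q n oo ?H)"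
    using fps_compose_assoc[OF g0 H0, of T] normalized_commute[of n] by simp
  also have "\<dots> = (T oo normalized g \<gamma> q n) oo ?H"
    using fps_compose_assoc[OF H0 normalized_nth_0] by simp
  finally show ?thesis
    using fps_compose_inj_right[OF H0 H1] by blast
qed

lemma normalized_cong: "fps_cong (n + 2) (normalized g \<gamma> q (Suc n)) (normalized g \<gamma> q n)"
  using X_plus_monom_conj(1)[OF normalized_step] normalized_nth_0 by simp

lemma normalized_nth:
  "normalized g \<gamma> q n $ 1 = \<gamma> \<and>
     (\<forall>j \<le> n + 1. j mod q \<noteq> 1 mod q \<longrightarrow> normalized g \<gamma> q n $ j = 0)"
proof (induction n)
  case 0
  have "normalized g \<gamma> q 0 = g"
    using g0 fps_inv_right[of "fps_X :: 'a fps"] by (simp add: normalized_def)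
  then show ?case
    using g0 g1 by (auto simp: le_Suc_eq)
next
  case (Suc n)
  have cong: "fps_cong (n + 2) (normalized g \<gamma> q (Suc n)) (normalized g \<gamma> q n)"
    by (rule normalized_cong)
  have "normalized g \<gamma> q (Suc n) $ j = 0" if j: "j \<le> n + 2" "j mod q \<noteq> 1 mod q" for j
  proof (cases "j = n + 2")
    case True
    let ?N = "normalized g \<gamma> q n"
    have "\<gamma> - \<gamma> ^ (n + 2) \<noteq> 0"
      using non_resonant[OF j(2)] True by simp
    moreover have "killing_coeff \<gamma> q ?N (n + 2) = ?N $ (n + 2) / (\<gamma> - \<gamma> ^ (n + 2))"
      using j(2) True by (simp add: killing_coeff_def)
    moreover have "normalized g \<gamma> q (Suc n) $ (n + 2)
        = ?N $ (n + 2) + killing_coeff \<gamma> q ?N (n + 2) * ((?N $ 1) ^ (n + 2) - ?N $ 1)"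
      using X_plus_monom_conj(2)[OF normalized_step _ normalized_nth_0] by simp
    ultimately show ?thesis
      using Suc.IH True by (simp add: field_simps)
  next
    case False
    then show ?thesis
      using cong Suc.IH j by (simp add: fps_cong_def)
  qed
  moreover have "normalized g \<gamma> q (Suc n) $ 1 = \<gamma>"
    using cong Suc.IH by (simp add: fps_cong_def)
  ultimately show ?case
    by simp
qed

lemma exists_supported_conjugate: "\<exists>h. admissible h \<and> supported_mod q 1 (h oo g oo fps_inv h)"
proof -
  define h where "h = Abs_fps (\<lambda>i. normalizer g \<gamma> q i $ i)"
  define G where "G = Abs_fps (\<lambda>i. normalized g \<gamma> q i $ i)"
  have h: "fps_cong (Suc n) h (normalizer g \<gamma> q n)" for n
    unfolding h_def by (rule fps_cong_diagonal[OF normalizer_cong])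
  have G: "fps_cong (Suc n) G (normalized g \<gamma> q n)" for n
    unfolding G_def by (intro fps_cong_diagonal fps_cong_mono[OF normalized_cong]) simp
  have h01: "h $ 0 = 0" "h $ 1 = 1"
    using h[of 1] normalizer_nth_0_1 by (auto simp: fps_cong_def)
  have "G oo h = h oo g"
  proof (rule fps_ext)
    fix n
    have "fps_cong (Suc n) (G oo h) (normalized g \<gamma> q n oo normalizer g \<gamma> q n)"
      using fps_cong_compose_right[OF G] fps_cong_compose_left[OF h] fps_cong_trans by blast
    also have "normalized g \<gamma> q n oo normalizer g \<gamma> q n = normalizer g \<gamma> q n oo g"
      by (rule normalized_commute)
    also have "fps_cong (Suc n) \<dots> (h oo g)"
      by (rule fps_cong_compose_right[OF fps_cong_sym[OF h]])
    finally show "(G oo h) $ n = (h oo g) $ n"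
      by (simp add: fps_cong_def)
  qed
  then have "G = h oo g oo fps_inv h"
    using conjugate_iff_commute[of h g G] h01 g0 by simp
  moreover have "supported_mod q 1 G"
    unfolding supported_mod_def G_def using normalized_nth by simp
  ultimately show ?thesis
    using h01 by (auto simp: admissible_def)
qed

end

lemma conjugated_imp_commute:
  assumes "conjugated g G" "g $ 0 = 0"
  obtains h where "h $ 0 = 0" "h $ 1 \<noteq> 0" "G oo h = h oo g"
  using assms conjugate_iff_commute[of _ g G] unfolding conjugated_def admissible_def by blast

lemma conjugate_nth_0_1:
  fixes h g :: "'a::field fps"
  assumes "h $ 0 = 0" "h $ 1 \<noteq> 0" "g $ 0 = 0"
  shows "(h oo g oo fps_inv h) $ 0 = 0" "(h oo g oo fps_inv h) $ 1 = g $ 1"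
  using assms fps_compose_nth_1[of "fps_inv h" "h oo g"] fps_compose_nth_1[of g h] fps_inv_nth_1[of h]
  by simp_all

lemma exists_normal_form_conjugate:
  fixes g :: "'a::field fps"
  assumes "g $ 0 = 0" "g $ 1 = \<gamma>" "\<gamma> \<noteq> 0" "q > 0"
    and non_resonant: "\<And>n. n mod q \<noteq> 1 mod q \<Longrightarrow> \<gamma> ^ n \<noteq> \<gamma>"
  shows "\<exists>a. conjugated g (normal_form \<gamma> q a)"
proof -
  obtain h where h: "admissible h" and G: "supported_mod q 1 (h oo g oo fps_inv h)"
    using exists_supported_conjugate[OF assms(1,2) non_resonant] by blast
  have "(h oo g oo fps_inv h) $ 0 = 0" "(h oo g oo fps_inv h) $ 1 = \<gamma>"
    using conjugate_nth_0_1[of h g] h assms(1,2) by (auto simp: admissible_def)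
  then have "h oo g oo fps_inv h = normal_form \<gamma> q (\<lambda>j. (h oo g oo fps_inv h) $ (j * q + 1) / \<gamma>)"
    using supported_mod_eq_normal_form[OF assms(4,3) _ _ G] by blast
  then show ?thesis
    using h unfolding conjugated_def by metis
qed

lemma normal_form_conjugate_i0:
  fixes g :: "'a::field fps"
  assumes conj: "conjugated g (normal_form \<gamma> q a)" and g: "g $ 0 = 0"
    and "\<gamma> ^ q = 1" "q > 0" "(of_nat q :: 'a) \<noteq> 0"
  shows "a 1 \<noteq> 0 \<longleftrightarrow> i0 (fps_iter g q) = enat q"
proof -
  let ?N = "normal_form \<gamma> q a"
  obtain h where h: "h $ 0 = 0" "h $ 1 \<noteq> 0" and comm: "?N oo h = h oo g"
    using conjugated_imp_commute[OF conj g] .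
  have N: "supported_mod q 1 ?N" "?N $ 0 = 0" "?N $ 1 = \<gamma>" "?N $ (q + 1) = \<gamma> * a 1"
    using \<open>q > 0\<close> supported_mod_normal_form by (auto simp: normal_form_nth)
  have "fps_iter ?N q oo h = h oo fps_iter g q"
    using fps_iter_commute[OF comm h(1) g N(2)] .
  moreover have "fps_cong (q + 1 + 1) (fps_iter ?N q) (fps_X + fps_const (of_nat q * a 1) * fps_X ^ (q + 1))"
    using supported_mod_fps_iter_tangent[OF N assms(3,4)] by simp
  ultimately have "fps_cong (q + 1 + 1) (fps_iter g q)
      (fps_X + fps_const (of_nat q * a 1 * (h $ 1) ^ (q + 1 - 1)) * fps_X ^ (q + 1))"
    by (intro fps_cong_conj_tangent[OF h fps_iter_nth_0[OF g]]) simp_all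
  then have "fps_cong (q + 2) (fps_iter g q)
      (fps_X + fps_const (of_nat q * a 1 * (h $ 1) ^ q) * fps_X ^ (q + 1))"
    by (simp add: numeral_2_eq_2)
  then have "i0 (fps_iter g q) = enat q \<longleftrightarrow> of_nat q * a 1 * (h $ 1) ^ q \<noteq> 0"
    by (rule i0_eq_iff_coeff)
  then show ?thesis
    using h(2) \<open>(of_nat q :: 'a) \<noteq> 0\<close> by simp
qed

lemma conjugated_common_imp_commute:
  fixes g A B :: "'a::field fps"
  assumes "conjugated g A" "conjugated g B" and g: "g $ 0 = 0" and A: "A $ 0 = 0"
  obtains H where "H $ 0 = 0" "H $ 1 \<noteq> 0" "H oo A = B oo H"
proof -
  obtain h\<^sub>1 where h\<^sub>1: "h\<^sub>1 $ 0 = 0" "h\<^sub>1 $ 1 \<noteq> 0" and comm\<^sub>1: "A oo h\<^sub>1 = h\<^sub>1 oo g"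
    using conjugated_imp_commute[OF assms(1) g] .
  obtain h\<^sub>2 where h\<^sub>2: "h\<^sub>2 $ 0 = 0" "h\<^sub>2 $ 1 \<noteq> 0" and comm\<^sub>2: "B oo h\<^sub>2 = h\<^sub>2 oo g"
    using conjugated_imp_commute[OF assms(2) g] .
  define H where "H = h\<^sub>2 oo fps_inv h\<^sub>1"
  have "(H oo A) oo h\<^sub>1 = H oo (h\<^sub>1 oo g)"
    using h\<^sub>1 A comm\<^sub>1 by (simp add: fps_compose_assoc[symmetric])
  also have "\<dots> = h\<^sub>2 oo ((fps_inv h\<^sub>1 oo h\<^sub>1) oo g)"
    using h\<^sub>1 g by (simp add: H_def fps_compose_assoc)
  also have "\<dots> = B oo (h\<^sub>2 oo (fps_inv h\<^sub>1 oo h\<^sub>1))"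
    using fps_inv[OF h\<^sub>1] h\<^sub>2 g comm\<^sub>2 by simp
  also have "\<dots> = (B oo H) oo h\<^sub>1"
    using h\<^sub>1 h\<^sub>2 by (simp add: H_def fps_compose_assoc)
  finally have "H oo A = B oo H"
    using fps_compose_inj_right[OF h\<^sub>1] by blast
  moreover have "H $ 0 = 0" "H $ 1 \<noteq> 0"
    using h\<^sub>1(2) h\<^sub>2 fps_compose_nth_1[of "fps_inv h\<^sub>1" h\<^sub>2] fps_inv_nth_1[of h\<^sub>1] by (simp_all add: H_def)
  ultimately show ?thesis
    using that by blast
qed

lemma normal_form_commute_coeffs:
  fixes H :: "'a::field fps"
  assumes comm: "H oo normal_form \<gamma> q a = normal_form \<gamma> q b oo H"
    and H: "supported_mod q 1 H" "H $ 0 = 0" "H $ 1 \<noteq> 0"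
    and "\<gamma> ^ q = 1" "\<gamma> \<noteq> 0" "q > 0"
  shows "a 1 = b 1 * (H $ 1) ^ q" "a 2 = b 2 * (H $ 1) ^ (2 * q)"
proof -
  let ?Na = "normal_form \<gamma> q a" and ?Nb = "normal_form \<gamma> q b"
  have Na: "supported_mod q 1 ?Na" "?Na $ 0 = 0" "?Na $ 1 = \<gamma>"
      "?Na $ (q + 1) = \<gamma> * a 1" "?Na $ (2 * q + 1) = \<gamma> * a 2"
    and Nb: "supported_mod q 1 ?Nb" "?Nb $ 0 = 0" "?Nb $ 1 = \<gamma>"
      "?Nb $ (q + 1) = \<gamma> * b 1" "?Nb $ (2 * q + 1) = \<gamma> * b 2"
    using \<open>q > 0\<close> supported_mod_normal_form by (auto simp: normal_form_nth)
  define c d e where "c = H $ 1" and "d = H $ (q + 1)" and "e = H $ (2 * q + 1)"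
  note lhs = supported_mod_compose_nth[OF H(1,2) Na(1,2) \<open>q > 0\<close>]
  note rhs = supported_mod_compose_nth[OF Nb(1,2) H(1,2) \<open>q > 0\<close>]
  have \<gamma>_pow: "\<gamma> ^ (q + 1) = \<gamma>" "\<gamma> ^ (2 * q + 1) = \<gamma>"
    using \<open>\<gamma> ^ q = 1\<close> by (simp_all add: power_add power_mult mult.commute[of 2 q])
  have "(H oo ?Na) $ (q + 1) = c * (\<gamma> * a 1) + d * \<gamma>"
    by (simp only: lhs(1) Na(3,4) \<gamma>_pow c_def d_def)
  moreover have "(?Nb oo H) $ (q + 1) = \<gamma> * d + \<gamma> * b 1 * c ^ (q + 1)"
    by (simp only: rhs(1) Nb(3,4) c_def d_def)
  ultimately have "\<gamma> * c * a 1 = \<gamma> * c * (b 1 * c ^ q)"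
    using comm by (simp add: algebra_simps)
  then show a1: "a 1 = b 1 * (H $ 1) ^ q"
    using \<open>\<gamma> \<noteq> 0\<close> H(3) by (simp add: c_def)
  have "(H oo ?Na) $ (2 * q + 1) = c * (\<gamma> * a 2) + of_nat (q + 1) * d * \<gamma> ^ q * (\<gamma> * a 1) + e * \<gamma>"
    by (simp only: lhs(2) Na(3-5) \<gamma>_pow c_def d_def e_def)
  moreover have "(?Nb oo H) $ (2 * q + 1)
      = \<gamma> * e + of_nat (q + 1) * (\<gamma> * b 1) * c ^ q * d + \<gamma> * b 2 * c ^ (2 * q + 1)"
    by (simp only: rhs(2) Nb(3-5) c_def d_def e_def)
  ultimately have "\<gamma> * c * a 2 = \<gamma> * c * (b 2 * c ^ (2 * q))"
    using comm \<open>\<gamma> ^ q = 1\<close> unfolding a1 c_def[symmetric] by (simp add: algebra_simps)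
  then show "a 2 = b 2 * (H $ 1) ^ (2 * q)"
    using \<open>\<gamma> \<noteq> 0\<close> H(3) by (simp add: c_def)
qed

text \<open>No assumption on \<open>i\<^sub>0\<close> is needed here: if \<open>a\<^sub>1 = 0\<close> then also \<open>b\<^sub>1 = 0\<close>, and both
  quotients are \<open>0\<close> by the convention \<open>x / 0 = 0\<close>.\<close>

lemma normal_form_conjugate_quotient:
  fixes g :: "'a::field fps"
  assumes "conjugated g (normal_form \<gamma> q a)" "conjugated g (normal_form \<gamma> q b)"
    and g: "g $ 0 = 0" and "\<gamma> ^ q = 1" "\<gamma> \<noteq> 0" "q > 0"
    and non_resonant: "\<And>n. n mod q \<noteq> 1 mod q \<Longrightarrow> \<gamma> ^ n \<noteq> \<gamma>"
  shows "a 2 / (a 1)\<^sup>2 = b 2 / (b 1)\<^sup>2"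
proof -
  have N: "supported_mod q 1 (normal_form \<gamma> q c)" "normal_form \<gamma> q c $ 0 = 0"
    "normal_form \<gamma> q c $ 1 = \<gamma>" for c
    using \<open>q > 0\<close> supported_mod_normal_form by (auto simp: normal_form_nth)
  obtain H where H: "H $ 0 = 0" "H $ 1 \<noteq> 0"
    and comm: "H oo normal_form \<gamma> q a = normal_form \<gamma> q b oo H"
    using conjugated_common_imp_commute[OF assms(1,2) g N(2)] .
  have "supported_mod q 1 H"
    using commute_imp_supported_mod[OF comm H(1) N N non_resonant] .
  then have "a 1 = b 1 * (H $ 1) ^ q" "a 2 = b 2 * (H $ 1) ^ (2 * q)"
    using normal_form_commute_coeffs[OF comm _ H assms(4-6)] by simp_all
  then show ?thesis
    using H(2) by (simp add: power_mult_distrib power_mult mult.commute[of 2 q])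
qed

theorem proposition4p1:
  fixes \<gamma> :: "'a::field" and p q :: nat and g :: "'a fps"
  assumes "prime p" and "CHAR('a) = p"
    and "q > 0" and "\<gamma> ^ q = 1" and "\<forall>m. 0 < m \<and> m < q \<longrightarrow> \<gamma> ^ m \<noteq> 1"
    and "fps_nth g 0 = 0" and "fps_nth g 1 = \<gamma>"
  shows "(\<exists>a. conjugated g (normal_form \<gamma> q a))
    \<and> (\<forall>a. conjugated g (normal_form \<gamma> q a) \<longrightarrow> (a 1 \<noteq> 0 \<longleftrightarrow> i0 (fps_iter g q) = enat q))
    \<and> (i0 (fps_iter g q) = enat q \<longrightarrow>
        (\<forall>a b. conjugated g (normal_form \<gamma> q a) \<and> conjugated g (normal_form \<gamma> q b)
           \<longrightarrow> a 2 / (a 1)^2 = b 2 / (b 1)^2))"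
proof -
  have "\<gamma> \<noteq> 0"
    using assms(3,4) by (auto simp: power_0_left)
  have non_resonant: "\<And>n. n mod q \<noteq> 1 mod q \<Longrightarrow> \<gamma> ^ n \<noteq> \<gamma>"
    using primitive_root_power_eq_self[OF assms(4,5,3)] by blast
  have "(of_nat q :: 'a) \<noteq> 0"
    by (rule primitive_root_order_neq_0[OF assms(1-5)])
  then have "\<forall>a. conjugated g (normal_form \<gamma> q a) \<longrightarrow> (a 1 \<noteq> 0 \<longleftrightarrow> i0 (fps_iter g q) = enat q)"
    using normal_form_conjugate_i0[OF _ assms(6,4,3)] by blast
  moreover have "a 2 / (a 1)^2 = b 2 / (b 1)^2"
    if "conjugated g (normal_form \<gamma> q a)" "conjugated g (normal_form \<gamma> q b)" for a b
    using normal_form_conjugate_quotient[OF that assms(6,4) \<open>\<gamma> \<noteq> 0\<close> assms(3) non_resonant] .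
  ultimately show ?thesis
    using exists_normal_form_conjugate[OF assms(6,7) \<open>\<gamma> \<noteq> 0\<close> assms(3) non_resonant] by blast
qed

end
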